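(* Let $I,S$ be numerical semigroups such that $I$ is irreducible, $S\subseteq I$ and $\mathrm{F}(S)=\mathrm{F}(I)$. Then $S=I\setminus A$ for some $A\subseteq\{x\in I\mid \frac{\mathrm{F}(I)}{2}<x<\mathrm{F}(I)\}$ if and only if $\Delta(S)=\Delta(I)$.
   Context: A numerical semigroup is a subset $S\subseteq\mathbb{N}$ closed under addition with $0\in S$ and $\mathbb{N}\setminus S$ finite; $\mathrm{F}(S)=\max(\mathbb{Z}\setminus S)$. A numerical semigroup is irreducible if it is not the intersection of two numerical semigroups properly containing it. $\Delta(S)=\{s\in S\mid s<\frac{\mathrm{F}(S)}{2}\}$. *)

theory Defs
  imports Main
begin

definition numerical_semigroup :: "nat set \<Rightarrow> bool" where
  "numerical_semigroup S \<longleftrightarrow> 0 \<in> S \<and> (\<forall>x\<in>S. \<forall>y\<in>S. x + y \<in> S) \<and> finite (UNIV - S)"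

text \<open>Frobenius number F(S) = max (Z \ S); negative integers are never in S, so
  F(N) = -1, otherwise it is the largest gap.\<close>
definition frobenius :: "nat set \<Rightarrow> int" where
  "frobenius S = (if S = UNIV then -1 else int (Max (UNIV - S)))"

definition irreducible_ns :: "nat set \<Rightarrow> bool" where
  "irreducible_ns S \<longleftrightarrow> numerical_semigroup S \<and>
     \<not> (\<exists>S1 S2. numerical_semigroup S1 \<and> numerical_semigroup S2 \<and>
                S \<subset> S1 \<and> S \<subset> S2 \<and> S = S1 \<inter> S2)"

definition Delta :: "nat set \<Rightarrow> nat set" where
  "Delta S = {s \<in> S. 2 * int s < frobenius S}"

end

theory Submission
  imports Defs
begin

text \<open>Removing elements above half the Frobenius number does not touch \<open>\<Delta>\<close>, which gives one
  direction. Conversely, a gap \<open>x\<close> of \<open>S\<close> lying in \<open>I\<close> satisfies \<open>x \<le> F\<close>; equality \<open>\<Delta>(S) = \<Delta>(I)\<close>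
  forces \<open>2x \<ge> F\<close>, and \<open>x \<noteq> F\<close>, \<open>2x \<noteq> F\<close> since \<open>F \<notin> I\<close> while \<open>x, x + x \<in> I\<close>.\<close>

lemma gap_le_frobenius:
  assumes "numerical_semigroup S" "x \<notin> S"
  shows "int x \<le> frobenius S"
proof -
  have "finite (UNIV - S)" using assms(1) by (simp add: numerical_semigroup_def)
  hence "x \<le> Max (UNIV - S)" using assms(2) by (intro Max_ge) auto
  moreover have "S \<noteq> UNIV" using assms(2) by auto
  ultimately show ?thesis by (simp add: frobenius_def)
qed

lemma frobenius_notin:
  assumes "numerical_semigroup S" "S \<noteq> UNIV"
  shows "nat (frobenius S) \<notin> S"
proof -
  have "finite (UNIV - S)" using assms(1) by (simp add: numerical_semigroup_def)
  hence "Max (UNIV - S) \<in> UNIV - S" using assms(2) by (intro Max_in) auto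
  thus ?thesis
    using assms(2) by (auto simp: frobenius_def)
qed

lemma mem_neq_frobenius:
  assumes "numerical_semigroup S" "S \<noteq> UNIV" "x \<in> S"
  shows "int x \<noteq> frobenius S" "2 * int x \<noteq> frobenius S"
proof -
  have "x + x \<in> S" using assms(1,3) by (simp add: numerical_semigroup_def)
  moreover note assms(3) frobenius_notin[OF assms(1,2)]
  ultimately show "int x \<noteq> frobenius S" "2 * int x \<noteq> frobenius S"
    by (metis nat_int, metis mult_2 nat_int of_nat_mult of_nat_numeral)
qed

lemma Delta_diff_upper:
  assumes "frobenius (I - A) = frobenius I" "\<forall>x\<in>A. frobenius I < 2 * int x"
  shows "Delta (I - A) = Delta I"
  using assms unfolding Delta_def by force

lemma gap_between_half_frobenius_and_frobenius:
  assumes I: "numerical_semigroup I" and S: "numerical_semigroup S"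
    and F: "frobenius S = frobenius I" and D: "Delta S = Delta I"
    and x: "x \<in> I" "x \<notin> S"
  shows "frobenius I < 2 * int x" "int x < frobenius I"
proof -
  have le: "int x \<le> frobenius I" using gap_le_frobenius[OF S x(2)] F by simp
  have "I \<noteq> UNIV"
  proof
    assume "I = UNIV"
    hence "frobenius I = -1" by (simp add: frobenius_def)
    thus False using le by simp
  qed
  note ne = mem_neq_frobenius[OF I this x(1)]
  have "x \<notin> Delta I" using D x by (auto simp: Delta_def)
  hence "\<not> 2 * int x < frobenius I" using x(1) by (simp add: Delta_def)
  thus "frobenius I < 2 * int x" "int x < frobenius I" using ne le by auto
qed

theorem proposition25:
  fixes I S :: "nat set"
  assumes "numerical_semigroup I" and "numerical_semigroup S"
    and "irreducible_ns I" and "S \<subseteq> I" and "frobenius S = frobenius I"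
  shows "(\<exists>A. A \<subseteq> {x \<in> I. frobenius I < 2 * int x \<and> int x < frobenius I} \<and> S = I - A)
         \<longleftrightarrow> Delta S = Delta I"
proof
  assume "\<exists>A. A \<subseteq> {x \<in> I. frobenius I < 2 * int x \<and> int x < frobenius I} \<and> S = I - A"
  then obtain A where "A \<subseteq> {x \<in> I. frobenius I < 2 * int x \<and> int x < frobenius I}" "S = I - A"
    by blast
  with assms(5) show "Delta S = Delta I" using Delta_diff_upper[of I A] by auto
next
  assume "Delta S = Delta I"
  hence "I - S \<subseteq> {x \<in> I. frobenius I < 2 * int x \<and> int x < frobenius I}"
    using gap_between_half_frobenius_and_frobenius[OF assms(1,2,5)] by blast
  moreover have "S = I - (I - S)" using assms(4) by blast
  ultimately show "\<exists>A. A \<subseteq> {x \<in> I. frobenius I < 2 * int x \<and> int x < frobenius I} \<and> S = I - A"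
    by blast
qed

end
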